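(* If $A \subseteq \mathbb{N}$ is Turing incomputable (i.e. its characteristic sequence is not computable), then $\sigma_A : \mathbb{N} \to \mathbb{N}$ is a permutation of $\mathbb{N}$. In particular, if $A$ is bi-immune, then $\sigma_A$ is a permutation.
   Context: $\mathbb{N}$ denotes the non-negative integers. For $i \in \mathbb{N}$, $\sigma_{(i)}$ is the permutation of $\mathbb{N}$ swapping $i$ and $i+1$ and fixing all other numbers. For $A \subseteq \mathbb{N}$ with increasing enumeration $a_0 < a_1 < \cdots$, define $\sigma_A : \mathbb{N} \to \mathbb{N}$ by $\sigma_A(x) = \lim_{n \to \infty} (\sigma_{(a_0)} \circ \sigma_{(a_1)} \circ \cdots \circ \sigma_{(a_n)})(x)$ (the sequence is eventually constant for each $x$); if $A$ is finite, $\sigma_A$ is the finite composition, and $\sigma_\emptyset$ is the identity. Here $g \circ f$ means apply $f$ first. A set $A$ is immune if it is infinite and contains no infinite computably enumerable subset; $A$ is bi-immune if both $A$ and $\mathbb{N} - A$ are immune. *)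

theory Defs
  imports Main "HOL-Combinatorics.Transposition"
begin

definition sig :: "nat \<Rightarrow> nat \<Rightarrow> nat" where
  "sig i = transpose i (Suc i)"

text \<open>prefix n A = the composition sigma_(a0) o sigma_(a1) o ... o sigma_(ak),
  where a0 < a1 < ... < ak enumerate the elements of A below n
  (the identity if there are none).\<close>
primrec prefix :: "nat set \<Rightarrow> nat \<Rightarrow> nat \<Rightarrow> nat" where
  "prefix A 0 = id"
| "prefix A (Suc n) = (if n \<in> A then prefix A n \<circ> sig n else prefix A n)"

definition sigma :: "nat set \<Rightarrow> nat \<Rightarrow> nat" where
  "sigma A x = (THE y. \<forall>\<^sub>F n in sequentially. prefix A n x = y)"

primrec prim_rec :: "(nat list \<Rightarrow> nat) \<Rightarrow> (nat list \<Rightarrow> nat) \<Rightarrow> nat \<Rightarrow> nat list \<Rightarrow> nat" where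
  "prim_rec f g 0 xs = f xs"
| "prim_rec f g (Suc y) xs = g (y # prim_rec f g y xs # xs)"

text \<open>recursive n f: f, viewed as an n-ary function on argument lists of length n,
  is a (total) general recursive function (Kleene).\<close>
inductive recursive :: "nat \<Rightarrow> (nat list \<Rightarrow> nat) \<Rightarrow> bool" where
  zero: "recursive n (\<lambda>xs. 0)"
| succ: "recursive 1 (\<lambda>xs. Suc (xs ! 0))"
| proj: "i < n \<Longrightarrow> recursive n (\<lambda>xs. xs ! i)"
| comp: "\<lbrakk>recursive m f; length gs = m; \<forall>g\<in>set gs. recursive n g\<rbrakk>
         \<Longrightarrow> recursive n (\<lambda>xs. f (map (\<lambda>g. g xs) gs))"
| primr: "\<lbrakk>recursive n f; recursive (Suc (Suc n)) g\<rbrakk>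
         \<Longrightarrow> recursive (Suc n) (\<lambda>xs. prim_rec f g (hd xs) (tl xs))"
| mu: "\<lbrakk>recursive (Suc n) f; \<forall>xs. length xs = n \<longrightarrow> (\<exists>y. f (y # xs) = 0)\<rbrakk>
         \<Longrightarrow> recursive n (\<lambda>xs. LEAST y. f (y # xs) = 0)"
| ext: "\<lbrakk>recursive n f; \<forall>xs. length xs = n \<longrightarrow> g xs = f xs\<rbrakk> \<Longrightarrow> recursive n g"

definition computable_set :: "nat set \<Rightarrow> bool" where
  "computable_set A \<longleftrightarrow> recursive 1 (\<lambda>xs. if xs ! 0 \<in> A then 1 else 0)"

text \<open>Computably enumerable = Sigma^0_1: projection of a decidable binary relation.\<close>
definition ce_set :: "nat set \<Rightarrow> bool" where
  "ce_set W \<longleftrightarrow> (\<exists>f. recursive 2 f \<and> W = {x. \<exists>y. f [x, y] = 0})"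

definition immune :: "nat set \<Rightarrow> bool" where
  "immune A \<longleftrightarrow> infinite A \<and> \<not> (\<exists>W. ce_set W \<and> infinite W \<and> W \<subseteq> A)"

definition bi_immune :: "nat set \<Rightarrow> bool" where
  "bi_immune A \<longleftrightarrow> immune A \<and> immune (UNIV - A)"

end

theory Submission
  imports Defs "HOL-Library.Infinite_Set"
begin

text \<open>No transposition \<open>sig i\<close> with \<open>x < i\<close> moves \<open>x\<close>, so \<open>sigma A x\<close> is the value of a
  finite prefix composition at \<open>x\<close>, and injectivity is inherited from these bijections. For
  surjectivity onto \<open>y\<close>, pick \<open>n \<notin> A\<close> with \<open>y \<le> n\<close>: the prefix composition of the
  \<open>sig i\<close> with \<open>i < n\<close> permutes \<open>{..n}\<close>, and since \<open>sig n\<close> is skipped no later factor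
  touches \<open>{..n}\<close>, so a preimage of \<open>y\<close> under that prefix is one under \<open>sigma A\<close>. Hence
  \<open>sigma A\<close> is a permutation as soon as \<open>UNIV - A\<close> is infinite, which holds for bi-immune
  \<open>A\<close> and, since cofinite sets are computable, for incomputable \<open>A\<close>.\<close>

lemma sig_apply_other: "k \<noteq> i \<Longrightarrow> k \<noteq> Suc i \<Longrightarrow> sig i k = k"
  by (simp add: sig_def)

lemma bij_prefix: "bij (prefix A n)"
proof (induction n)
  case (Suc n)
  have "bij (sig n)" unfolding sig_def by (rule bij_transpose)
  with Suc.IH show ?case by (simp add: bij_comp)
qed (simp only: prefix.simps bij_id)

lemma prefix_apply_above: "n < k \<Longrightarrow> prefix A n k = k"
  by (induction n) (simp_all add: sig_apply_other)

lemma prefix_stable: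
  assumes "x < n" and "n \<le> m"
  shows "prefix A m x = prefix A n x"
  using assms(2)
proof (induction m rule: dec_induct)
  case (step m)
  then have "sig m x = x" using assms(1) by (intro sig_apply_other) auto
  with step.IH show ?case by simp
qed simp

lemma sigma_eq_prefix:
  assumes "x < n"
  shows "sigma A x = prefix A n x"
  unfolding sigma_def
proof (rule the_equality)
  show "\<forall>\<^sub>F m in sequentially. prefix A m x = prefix A n x"
    unfolding eventually_sequentially using prefix_stable[OF assms] by blast
next
  fix y assume "\<forall>\<^sub>F m in sequentially. prefix A m x = y"
  then obtain N where "\<And>m. m \<ge> N \<Longrightarrow> prefix A m x = y"
    unfolding eventually_sequentially by blast
  then have "prefix A (max N n) x = y" by simp
  then show "y = prefix A n x" using prefix_stable[OF assms, of "max N n"] by simp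
qed

lemma inj_sigma: "inj (sigma A)"
proof (rule injI)
  fix x y assume "sigma A x = sigma A y"
  define m where "m = Suc (x + y)"
  have "x < m" "y < m" by (simp_all add: m_def)
  with \<open>sigma A x = sigma A y\<close> have "prefix A m x = prefix A m y"
    by (simp add: sigma_eq_prefix)
  then show "x = y" by (rule injD[OF bij_is_inj[OF bij_prefix]])
qed

lemma surj_sigma:
  assumes "infinite (UNIV - A)"
  shows "surj (sigma A)"
  unfolding surj_def
proof
  fix y
  obtain n where "n \<notin> A" "y \<le> n"
    using assms unfolding infinite_nat_iff_unbounded_le by blast
  obtain x where x: "prefix A n x = y"
    using bij_pointE[OF bij_prefix[of A n], of y] by metis
  have "x \<le> n"
  proof (rule ccontr)
    assume "\<not> x \<le> n"
    then have "prefix A n x = x" by (intro prefix_apply_above) simp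
    with x \<open>y \<le> n\<close> \<open>\<not> x \<le> n\<close> show False by simp
  qed
  then have "sigma A x = prefix A (Suc n) x" by (intro sigma_eq_prefix) simp
  also have "\<dots> = y" using \<open>n \<notin> A\<close> x by simp
  finally show "\<exists>x. y = sigma A x" by metis
qed

lemma bij_sigma: "infinite (UNIV - A) \<Longrightarrow> bij (sigma A)"
  by (simp add: bij_def inj_sigma surj_sigma)

lemma recursive_const: "recursive n (\<lambda>xs. c)"
proof (induction c)
  case 0
  show ?case by (rule recursive.zero)
next
  case (Suc c)
  have "recursive n (\<lambda>xs. (\<lambda>ys. Suc (ys ! 0)) (map (\<lambda>g. g xs) [\<lambda>xs. c]))"
    by (rule recursive.comp[OF recursive.succ]) (use Suc in auto)
  then show ?case by simp
qed

lemma recursive_eventually_const: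
  assumes "\<forall>x\<ge>N. h x = h N"
  shows "recursive 1 (\<lambda>xs. h (xs ! 0))"
  using assms
proof (induction N arbitrary: h)
  case 0
  then have "\<forall>xs. length xs = 1 \<longrightarrow> h (xs ! 0) = h 0" using le0 by blast
  then show ?case by (rule recursive.ext[OF recursive_const])
next
  case (Suc N)
  have "\<forall>x\<ge>N. h (Suc x) = h (Suc N)" using Suc.prems Suc_le_mono by blast
  then have "recursive 1 (\<lambda>xs. h (Suc (xs ! 0)))" by (rule Suc.IH[of "h \<circ> Suc", unfolded comp_def])
  then have "recursive 2 (\<lambda>xs. (\<lambda>ys. h (Suc (ys ! 0))) (map (\<lambda>g. g xs) [\<lambda>xs. xs ! 0]))"
    by (rule recursive.comp) (auto intro: recursive.proj)
  then have "recursive 2 (\<lambda>xs. h (Suc (xs ! 0)))" by simp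
  then have rec: "recursive 1 (\<lambda>xs. prim_rec (\<lambda>_. h 0) (\<lambda>ys. h (Suc (ys ! 0))) (hd xs) (tl xs))"
    using recursive.primr[OF recursive_const[of 0 "h 0"]] by (simp add: numeral_2_eq_2)
  \<comment> \<open>primitive recursion serves only as the case distinction \<open>x = 0\<close> / \<open>x = Suc y\<close>\<close>
  have "\<forall>xs. length xs = 1 \<longrightarrow> h (xs ! 0) = prim_rec (\<lambda>_. h 0) (\<lambda>ys. h (Suc (ys ! 0))) (hd xs) (tl xs)"
  proof (intro allI impI)
    fix xs :: "nat list"
    assume "length xs = 1"
    then obtain a where "xs = [a]" by (cases xs) auto
    then show "h (xs ! 0) = prim_rec (\<lambda>_. h 0) (\<lambda>ys. h (Suc (ys ! 0))) (hd xs) (tl xs)"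
      by (cases a) simp_all
  qed
  then show ?case by (rule recursive.ext[OF rec])
qed

lemma computable_set_cofinite:
  assumes "finite (UNIV - A)"
  shows "computable_set A"
proof -
  obtain N where "UNIV - A \<subseteq> {..<N}"
    using assms finite_nat_iff_bounded by blast
  then have "\<forall>x\<ge>N. x \<in> A" by auto
  then have "\<forall>x\<ge>N. (if x \<in> A then 1 else 0) = (if N \<in> A then 1 else (0::nat))" by simp
  then show ?thesis
    unfolding computable_set_def by (rule recursive_eventually_const)
qed

theorem mainTheorem3:
  fixes A :: "nat set"
  shows "(\<not> computable_set A \<longrightarrow> bij (sigma A)) \<and> (bi_immune A \<longrightarrow> bij (sigma A))"
proof (intro conjI impI)
  assume "\<not> computable_set A"
  then have "infinite (UNIV - A)" using computable_set_cofinite by blast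
  then show "bij (sigma A)" by (rule bij_sigma)
next
  assume "bi_immune A"
  then have "infinite (UNIV - A)" unfolding bi_immune_def immune_def by simp
  then show "bij (sigma A)" by (rule bij_sigma)
qed

end
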